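(* Let $P$ be a finite set of points in the plane in general position (no three collinear) with $|P|$ even. Then $P$ has at most one pairwise crossing perfect matching.
   Context: A perfect matching on $P$ is a partition of $P$ into pairs, each pair $\{a,b\}$ regarded as the straight-line segment $ab$. A perfect matching is pairwise crossing if every two of its segments cross each other. *)

theory Defs
  imports "HOL-Analysis.Analysis"
begin

definition general_position :: "(real^2) set \<Rightarrow> bool" where
  "general_position P \<longleftrightarrow>
     (\<forall>a\<in>P. \<forall>b\<in>P. \<forall>c\<in>P. a \<noteq> b \<and> a \<noteq> c \<and> b \<noteq> c \<longrightarrow> \<not> collinear {a, b, c})"

definition perfect_matching :: "(real^2) set \<Rightarrow> (real^2) set set \<Rightarrow> bool" where
  "perfect_matching P M \<longleftrightarrow>
     (\<forall>e\<in>M. \<exists>a b. a \<noteq> b \<and> e = {a, b}) \<and>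
     \<Union>M = P \<and>
     (\<forall>e\<in>M. \<forall>e'\<in>M. e \<noteq> e' \<longrightarrow> e \<inter> e' = {})"

definition segments_cross :: "(real^2) set \<Rightarrow> (real^2) set \<Rightarrow> bool" where
  "segments_cross e e' \<longleftrightarrow> convex hull e \<inter> convex hull e' \<noteq> {}"

definition pairwise_crossing :: "(real^2) set set \<Rightarrow> bool" where
  "pairwise_crossing M \<longleftrightarrow> (\<forall>e\<in>M. \<forall>e'\<in>M. e \<noteq> e' \<longrightarrow> segments_cross e e')"

end

theory Submission
  imports Defs
begin

(* Let v be the lexicographically smallest point of P. In a pairwise crossing perfect matching
   every edge other than the edge vw at v crosses the segment vw, and by general position its
   endpoints lie strictly on opposite sides of the line vw; hence exactly (|P| - 2)/2 points of P
   lie to the left of vw. All other points lie in a half-plane bounded by a line through v, where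
   the angular order around v is transitive, so turning w counterclockwise strictly shrinks the
   set of points to the left of vw. Thus v has only one partner that halves P, both matchings
   contain the same edge at v, and induction on |P| finishes the proof. *)

definition det2 :: "real^2 \<Rightarrow> real^2 \<Rightarrow> real" where
  "det2 x y = x$1 * y$2 - x$2 * y$1"

definition orient :: "real^2 \<Rightarrow> real^2 \<Rightarrow> real^2 \<Rightarrow> real" where
  "orient a b c = det2 (b - a) (c - a)"

lemma vec2_eq_iff: "(x::real^2) = y \<longleftrightarrow> x$1 = y$1 \<and> x$2 = y$2"
  by (simp add: vec_eq_iff forall_2)

lemma orient_left_eq_0 [simp]: "orient a b a = 0"
  and orient_right_eq_0 [simp]: "orient a b b = 0"
  by (simp_all add: orient_def det2_def algebra_simps)

lemma orient_swap_right: "orient a c b = - orient a b c"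
  and orient_swap_left: "orient b a c = - orient a b c"
  by (simp_all add: orient_def det2_def algebra_simps)

lemma orient_convex_combination:
  "orient a b ((1 - u) *\<^sub>R c + u *\<^sub>R d) = (1 - u) * orient a b c + u * orient a b d"
  by (simp add: orient_def det2_def algebra_simps)

lemma det2_eq_0_imp_parallel:
  assumes "det2 x y = 0" "x \<noteq> 0"
  shows "\<exists>k. y = k *\<^sub>R x"
proof -
  define s where "s = x$1 * x$1 + x$2 * x$2"
  have "s \<noteq> 0"
    using assms(2) by (auto simp: s_def vec2_eq_iff add_nonneg_eq_0_iff)
  have det: "x$1 * y$2 = x$2 * y$1"
    using assms(1) by (simp add: det2_def)
  have "y$i * s = (x$1 * y$1 + x$2 * y$2) * x$i" if "i = 1 \<or> i = 2" for i
    using that unfolding s_def by (auto simp: algebra_simps det)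
  then have "y = ((x$1 * y$1 + x$2 * y$2) / s) *\<^sub>R x"
    using \<open>s \<noteq> 0\<close> by (simp add: vec2_eq_iff field_simps)
  then show ?thesis ..
qed

lemma collinear_if_orient_eq_0:
  assumes "orient a b c = 0"
  shows "collinear {a, b, c}"
proof (cases "b = a")
  case False
  then obtain k where "c - a = k *\<^sub>R (b - a)"
    using det2_eq_0_imp_parallel[of "b - a" "c - a"] assms by (auto simp: orient_def)
  then have "collinear {0, b - a, c - a}"
    unfolding collinear_lemma by blast
  then have "collinear {b, a, c}"
    using collinear_3[of b a c] by simp
  then show ?thesis
    by (simp add: insert_commute)
qed simp

lemma orient_ne_0_if_general_position:
  assumes "general_position P" "a \<in> P" "b \<in> P" "c \<in> P" "a \<noteq> b" "a \<noteq> c" "b \<noteq> c"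
  shows "orient a b c \<noteq> 0"
proof
  assume "orient a b c = 0"
  then have "collinear {a, b, c}"
    by (rule collinear_if_orient_eq_0)
  with assms show False
    unfolding general_position_def by simp
qed

lemma general_position_subset: "general_position P \<Longrightarrow> Q \<subseteq> P \<Longrightarrow> general_position Q"
  unfolding general_position_def by (meson subsetD)

lemma orient_mult_nonpos_if_segments_cross:
  assumes "segments_cross {a, b} {c, d}"
  shows "orient a b c * orient a b d \<le> 0"
proof -
  obtain p where p_ab: "p \<in> closed_segment a b" and p_cd: "p \<in> closed_segment c d"
    using assms unfolding segments_cross_def segment_convex_hull by blast
  obtain t where "p = (1 - t) *\<^sub>R a + t *\<^sub>R b"
    using p_ab unfolding in_segment by blast
  then have "orient a b p = 0"
    by (simp add: orient_convex_combination)
  moreover obtain u where "0 \<le> u" "u \<le> 1" "p = (1 - u) *\<^sub>R c + u *\<^sub>R d"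
    using p_cd unfolding in_segment by blast
  ultimately have combination: "(1 - u) * orient a b c + u * orient a b d = 0"
    by (simp add: orient_convex_combination)
  show ?thesis
  proof (rule ccontr)
    assume "\<not> ?thesis"
    then consider "orient a b c < 0" "orient a b d < 0" | "- orient a b c < 0" "- orient a b d < 0"
      by (auto simp: not_le zero_less_mult_iff)
    then show False
    proof cases
      case 1
      then have "(1 - u) * orient a b c + u * orient a b d < 0"
        using \<open>0 \<le> u\<close> \<open>u \<le> 1\<close> by (intro convex_bound_lt) auto
      with combination show False
        by simp
    next
      case 2
      then have "(1 - u) * - orient a b c + u * - orient a b d < 0"
        using \<open>0 \<le> u\<close> \<open>u \<le> 1\<close> by (intro convex_bound_lt) auto
      with combination show False
        by linarith
    qed
  qed
qed

lemma pairwise_crossingD: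
  "pairwise_crossing M \<Longrightarrow> e \<in> M \<Longrightarrow> e' \<in> M \<Longrightarrow> e \<noteq> e' \<Longrightarrow> segments_cross e e'"
  unfolding pairwise_crossing_def by blast

lemma pairwise_crossing_subset: "pairwise_crossing M \<Longrightarrow> N \<subseteq> M \<Longrightarrow> pairwise_crossing N"
  unfolding pairwise_crossing_def by blast

definition left_side :: "(real^2) set \<Rightarrow> real^2 \<Rightarrow> real^2 \<Rightarrow> (real^2) set" where
  "left_side P a b = {q \<in> P. orient a b q > 0}"

lemma finite_left_side: "finite P \<Longrightarrow> finite (left_side P a b)"
  by (simp add: left_side_def)

lemma perfect_matching_empty: "perfect_matching {} M \<Longrightarrow> M = {}"
  unfolding perfect_matching_def by (auto simp: Union_empty_conv)

lemma perfect_matching_edge_eq: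
  "perfect_matching P M \<Longrightarrow> e \<in> M \<Longrightarrow> e' \<in> M \<Longrightarrow> x \<in> e \<Longrightarrow> x \<in> e' \<Longrightarrow> e = e'"
  unfolding perfect_matching_def by blast

lemma perfect_matching_edge_subset: "perfect_matching P M \<Longrightarrow> e \<in> M \<Longrightarrow> e \<subseteq> P"
  unfolding perfect_matching_def by blast

lemma perfect_matching_edgeE:
  assumes "perfect_matching P M" "e \<in> M"
  obtains a b where "a \<noteq> b" "e = {a, b}"
proof -
  from assms(1) have "\<forall>e\<in>M. \<exists>a b. a \<noteq> b \<and> e = {a, b}"
    by (simp add: perfect_matching_def)
  with assms(2) that show thesis
    by blast
qed

lemma perfect_matching_edge_neq:
  assumes "perfect_matching P M" "{a, b} \<in> M"
  shows "a \<noteq> b"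
proof -
  obtain x y where "x \<noteq> y" and xy: "{a, b} = {x, y}"
    using perfect_matching_edgeE[OF assms] .
  have "x \<in> {a, b}" "y \<in> {a, b}"
    by (simp_all add: xy)
  with \<open>x \<noteq> y\<close> show ?thesis
    by auto
qed

lemma perfect_matching_Diff_edge:
  assumes "perfect_matching P M" "e \<in> M"
  shows "perfect_matching (P - e) (M - {e})"
proof -
  from assms(1) have pairs: "\<forall>e\<in>M. \<exists>a b. a \<noteq> b \<and> e = {a, b}"
    and cover: "\<Union>M = P" and disjoint: "\<forall>e\<in>M. \<forall>e'\<in>M. e \<noteq> e' \<longrightarrow> e \<inter> e' = {}"
    by (simp_all add: perfect_matching_def)
  have "\<Union>(M - {e}) = P - e"
    using cover disjoint assms(2) by blast
  with pairs disjoint show ?thesis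
    by (simp add: perfect_matching_def)
qed

lemma perfect_matching_ex_mate:
  assumes "perfect_matching P M" "q \<in> P"
  shows "\<exists>r. r \<noteq> q \<and> {q, r} \<in> M"
proof -
  have "q \<in> \<Union>M"
    using assms by (simp add: perfect_matching_def)
  then obtain e where "e \<in> M" "q \<in> e"
    by blast
  moreover obtain a b where "a \<noteq> b" "e = {a, b}"
    using perfect_matching_edgeE[OF assms(1) \<open>e \<in> M\<close>] .
  ultimately show ?thesis
    by (auto simp: insert_commute)
qed

definition mate :: "(real^2) set set \<Rightarrow> real^2 \<Rightarrow> real^2" where
  "mate M q = (SOME r. r \<noteq> q \<and> {q, r} \<in> M)"

lemma
  assumes "perfect_matching P M" "q \<in> P"
  shows mate_neq: "mate M q \<noteq> q"
    and mate_edge: "{q, mate M q} \<in> M"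
proof -
  have "mate M q \<noteq> q \<and> {q, mate M q} \<in> M"
    unfolding mate_def by (rule someI_ex[OF perfect_matching_ex_mate[OF assms]])
  then show "mate M q \<noteq> q" "{q, mate M q} \<in> M"
    by simp_all
qed

lemma mate_in: "perfect_matching P M \<Longrightarrow> q \<in> P \<Longrightarrow> mate M q \<in> P"
  using perfect_matching_edge_subset[OF _ mate_edge] by simp

lemma inj_on_mate:
  assumes "perfect_matching P M"
  shows "inj_on (mate M) P"
proof
  fix q q' assume "q \<in> P" "q' \<in> P" and same_mate: "mate M q = mate M q'"
  have "{q, mate M q} = {q', mate M q'}"
    using perfect_matching_edge_eq[OF assms mate_edge[OF assms \<open>q \<in> P\<close>]
        mate_edge[OF assms \<open>q' \<in> P\<close>], where x = "mate M q"] same_mate by simp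
  then have "q \<in> {q', mate M q'}"
    using insertI1[of q "{mate M q}"] by simp
  with same_mate mate_neq[OF assms \<open>q \<in> P\<close>] show "q = q'"
    by auto
qed

lemma mate_notin_edge:
  assumes "perfect_matching P M" "e \<in> M" "q \<in> P - e"
  shows "mate M q \<notin> e"
proof
  assume "mate M q \<in> e"
  then have "{q, mate M q} = e"
    using perfect_matching_edge_eq[OF assms(1) mate_edge[OF assms(1)] assms(2), where x = "mate M q"]
      assms(3) by simp
  with assms(3) show False
    by auto
qed

lemma mate_in_left_side:
  assumes "general_position P" "perfect_matching P M" "pairwise_crossing M"
    and "{v, w} \<in> M" "q \<in> left_side P v w"
  shows "mate M q \<in> left_side P w v"
proof -
  have "v \<in> P" "w \<in> P" "v \<noteq> w"
    using perfect_matching_edge_subset[OF assms(2,4)] perfect_matching_edge_neq[OF assms(2,4)] by auto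
  have "q \<in> P" "orient v w q > 0"
    using assms(5) by (simp_all add: left_side_def)
  then have "q \<notin> {v, w}"
    by auto
  define m where "m = mate M q"
  have "m \<in> P" "{q, m} \<in> M"
    using mate_in mate_edge assms(2) \<open>q \<in> P\<close> unfolding m_def by auto
  have "m \<notin> {v, w}"
    using mate_notin_edge[OF assms(2,4)] \<open>q \<in> P\<close> \<open>q \<notin> {v, w}\<close> unfolding m_def by blast
  have "{v, w} \<noteq> {q, m}"
    using \<open>q \<notin> {v, w}\<close> by auto
  then have "segments_cross {v, w} {q, m}"
    by (rule pairwise_crossingD[OF assms(3,4) \<open>{q, m} \<in> M\<close>])
  then have "orient v w q * orient v w m \<le> 0"
    by (rule orient_mult_nonpos_if_segments_cross)
  moreover have "orient v w m \<noteq> 0"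
    using orient_ne_0_if_general_position[OF assms(1) \<open>v \<in> P\<close> \<open>w \<in> P\<close> \<open>m \<in> P\<close>]
      \<open>v \<noteq> w\<close> \<open>m \<notin> {v, w}\<close> by auto
  ultimately have "orient w v m > 0"
    using \<open>orient v w q > 0\<close> orient_swap_left[of w v m] by (auto simp: mult_le_0_iff)
  with \<open>m \<in> P\<close> show ?thesis
    by (simp add: left_side_def m_def)
qed

lemma card_left_side_eq:
  assumes "finite P" "general_position P" "perfect_matching P M" "pairwise_crossing M"
    and "{v, w} \<in> M"
  shows "card (left_side P v w) = card (left_side P w v)"
proof -
  have "{w, v} \<in> M"
    using assms(5) by (simp add: insert_commute)
  have inj: "inj_on (mate M) (left_side P a b)" for a b
    using inj_on_mate[OF assms(3)] by (rule inj_on_subset) (simp add: left_side_def)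
  have "card (left_side P v w) \<le> card (left_side P w v)"
    using mate_in_left_side[OF assms(2-5)] by (intro card_inj_on_le[OF inj] finite_left_side assms(1)) auto
  moreover have "card (left_side P w v) \<le> card (left_side P v w)"
    using mate_in_left_side[OF assms(2-4) \<open>{w, v} \<in> M\<close>]
    by (intro card_inj_on_le[OF inj] finite_left_side assms(1)) auto
  ultimately show ?thesis
    by simp
qed

lemma card_eq_left_side_edge:
  assumes "finite P" "general_position P" "perfect_matching P M" "pairwise_crossing M"
    and "{v, w} \<in> M"
  shows "card P = 2 * card (left_side P v w) + 2"
proof -
  have "v \<in> P" "w \<in> P" "v \<noteq> w"
    using perfect_matching_edge_subset[OF assms(3,5)] perfect_matching_edge_neq[OF assms(3,5)] by auto
  have "orient v w q > 0 \<or> orient w v q > 0" if "q \<in> P - {v, w}" for q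
    using orient_ne_0_if_general_position[OF assms(2) \<open>v \<in> P\<close> \<open>w \<in> P\<close>, of q] that \<open>v \<noteq> w\<close>
      orient_swap_left[of w v q] by (auto simp: linorder_neq_iff)
  then have "P = {v, w} \<union> (left_side P v w \<union> left_side P w v)"
    using \<open>v \<in> P\<close> \<open>w \<in> P\<close> by (auto simp: left_side_def)
  moreover have "left_side P v w \<inter> left_side P w v = {}" "{v, w} \<inter> (left_side P v w \<union> left_side P w v) = {}"
    using orient_swap_left[of w v] by (auto simp: left_side_def)
  ultimately have "card P = card {v, w} + (card (left_side P v w) + card (left_side P w v))"
    using finite_left_side[OF assms(1)] by (metis card_Un_disjoint finite.emptyI finite.insertI finite_Un)
  with card_left_side_eq[OF assms] \<open>v \<noteq> w\<close> show ?thesis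
    by simp
qed

definition lex_pos :: "real^2 \<Rightarrow> bool" where
  "lex_pos x \<longleftrightarrow> x$1 > 0 \<or> (x$1 = 0 \<and> x$2 > 0)"

lemma lex_pos_det2_pos_imp_first_pos:
  assumes "lex_pos x" "lex_pos y" "det2 x y > 0"
  shows "x$1 > 0"
proof (rule ccontr)
  assume "\<not> x$1 > 0"
  with assms(1) have "x$1 = 0" "x$2 > 0"
    by (auto simp: lex_pos_def)
  moreover have "y$1 \<ge> 0"
    using assms(2) by (auto simp: lex_pos_def)
  ultimately have "det2 x y \<le> 0"
    by (simp add: det2_def)
  with assms(3) show False
    by simp
qed

lemma det2_trans:
  assumes "lex_pos x" "lex_pos y" "lex_pos z" "det2 x y > 0" "det2 y z > 0"
  shows "det2 x z > 0"
proof -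
  have "x$1 > 0" "y$1 > 0" "z$1 \<ge> 0"
    using lex_pos_det2_pos_imp_first_pos assms by (auto simp: lex_pos_def)
  have "y$1 * det2 x z = z$1 * det2 x y + x$1 * det2 y z"
    by (simp add: det2_def algebra_simps)
  also have "\<dots> > 0"
    using \<open>x$1 > 0\<close> \<open>z$1 \<ge> 0\<close> assms(4,5) by (simp add: add_nonneg_pos)
  finally show ?thesis
    using \<open>y$1 > 0\<close> by (simp add: zero_less_mult_iff)
qed

lemma lex_min_point:
  fixes P :: "(real^2) set"
  assumes "finite P" "P \<noteq> {}"
  obtains v where "v \<in> P" "\<And>p. p \<in> P \<Longrightarrow> p \<noteq> v \<Longrightarrow> lex_pos (p - v)"
proof -
  obtain u where u: "u \<in> P" "\<And>p. p \<in> P \<Longrightarrow> u$1 \<le> p$1"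
    using ex_is_arg_min_if_finite[OF assms, of "\<lambda>p. p$1"] unfolding is_arg_min_def by force
  define S where "S = {p \<in> P. p$1 = u$1}"
  have "finite S" "S \<noteq> {}"
    using assms(1) u(1) by (auto simp: S_def)
  then obtain v where v: "v \<in> S" "\<And>p. p \<in> S \<Longrightarrow> v$2 \<le> p$2"
    using ex_is_arg_min_if_finite[of S "\<lambda>p. p$2"] unfolding is_arg_min_def by force
  show thesis
  proof
    show "v \<in> P"
      using v(1) by (simp add: S_def)
    fix p assume "p \<in> P" "p \<noteq> v"
    then show "lex_pos (p - v)"
      using u(2) v unfolding S_def lex_pos_def by (force simp: vec2_eq_iff)
  qed
qed

lemma left_side_psubset:
  assumes lex_min: "\<And>p. p \<in> P \<Longrightarrow> p \<noteq> v \<Longrightarrow> lex_pos (p - v)"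
    and "w1 \<in> P" "w2 \<in> P" "w1 \<noteq> v" "w2 \<noteq> v" "orient v w1 w2 > 0"
  shows "left_side P v w2 \<subset> left_side P v w1"
proof
  show "left_side P v w2 \<subseteq> left_side P v w1"
  proof
    fix q assume "q \<in> left_side P v w2"
    then have "q \<in> P" "orient v w2 q > 0"
      by (simp_all add: left_side_def)
    then have "q \<noteq> v"
      by auto
    have "det2 (w1 - v) (q - v) > 0"
    proof (rule det2_trans)
      show "lex_pos (w1 - v)" "lex_pos (w2 - v)" "lex_pos (q - v)"
        using lex_min assms(2-5) \<open>q \<in> P\<close> \<open>q \<noteq> v\<close> by auto
      show "det2 (w1 - v) (w2 - v) > 0" "det2 (w2 - v) (q - v) > 0"
        using assms(6) \<open>orient v w2 q > 0\<close> by (simp_all add: orient_def)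
    qed
    with \<open>q \<in> P\<close> show "q \<in> left_side P v w1"
      by (simp add: left_side_def orient_def)
  qed
  have "w2 \<in> left_side P v w1 - left_side P v w2"
    using assms(3,6) by (simp add: left_side_def)
  then show "left_side P v w2 \<noteq> left_side P v w1"
    by blast
qed

lemma inj_on_card_left_side:
  assumes "finite P" "general_position P" "v \<in> P"
    and lex_min: "\<And>p. p \<in> P \<Longrightarrow> p \<noteq> v \<Longrightarrow> lex_pos (p - v)"
  shows "inj_on (\<lambda>w. card (left_side P v w)) (P - {v})"
proof
  have smaller: "card (left_side P v b) < card (left_side P v a)"
    if "a \<in> P - {v}" "b \<in> P - {v}" "orient v a b > 0" for a b
  proof -
    from lex_min that have "left_side P v b \<subset> left_side P v a"
      by (intro left_side_psubset) auto
    then show ?thesis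
      by (intro psubset_card_mono finite_left_side assms(1))
  qed
  fix w1 w2 assume w1: "w1 \<in> P - {v}" and w2: "w2 \<in> P - {v}"
    and same_card: "card (left_side P v w1) = card (left_side P v w2)"
  show "w1 = w2"
  proof (rule ccontr)
    assume "w1 \<noteq> w2"
    then have "orient v w1 w2 \<noteq> 0"
      using orient_ne_0_if_general_position[OF assms(2,3)] w1 w2 by auto
    then have "orient v w1 w2 > 0 \<or> orient v w2 w1 > 0"
      using orient_swap_right[of v w2 w1] by linarith
    with smaller[OF w1 w2] smaller[OF w2 w1] same_card show False
      by linarith
  qed
qed

lemma pairwise_crossing_perfect_matching_unique:
  assumes "finite P" "general_position P"
    and "perfect_matching P M1" "pairwise_crossing M1"
    and "perfect_matching P M2" "pairwise_crossing M2"
  shows "M1 = M2"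
  using assms
proof (induction "card P" arbitrary: P M1 M2 rule: less_induct)
  case less
  show ?case
  proof (cases "P = {}")
    case True
    then show ?thesis
      using perfect_matching_empty less.prems(3,5) by metis
  next
    case False
    then obtain v where "v \<in> P" and lex_min: "\<And>p. p \<in> P \<Longrightarrow> p \<noteq> v \<Longrightarrow> lex_pos (p - v)"
      using lex_min_point less.prems(1) by blast
    have "mate M1 v = mate M2 v"
    proof (rule inj_onD[OF inj_on_card_left_side[OF less.prems(1,2) \<open>v \<in> P\<close> lex_min]])
      show "card (left_side P v (mate M1 v)) = card (left_side P v (mate M2 v))"
        using card_eq_left_side_edge[OF less.prems(1-4) mate_edge[OF less.prems(3) \<open>v \<in> P\<close>]]
          card_eq_left_side_edge[OF less.prems(1,2,5,6) mate_edge[OF less.prems(5) \<open>v \<in> P\<close>]]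
        by simp
      show "mate M1 v \<in> P - {v}" "mate M2 v \<in> P - {v}"
        using mate_in mate_neq less.prems(3,5) \<open>v \<in> P\<close> by auto
    qed
    define e where "e = {v, mate M1 v}"
    have "e \<in> M1" "e \<in> M2"
      using mate_edge[OF less.prems(3) \<open>v \<in> P\<close>] mate_edge[OF less.prems(5) \<open>v \<in> P\<close>]
        \<open>mate M1 v = mate M2 v\<close> by (simp_all add: e_def)
    have "card (P - e) < card P"
      using \<open>v \<in> P\<close> less.prems(1) by (intro psubset_card_mono) (auto simp: e_def)
    moreover have "finite (P - e)"
      using less.prems(1) by simp
    ultimately have "M1 - {e} = M2 - {e}"
      by (rule less.hyps[OF _ _ general_position_subset[OF less.prems(2) Diff_subset]
            perfect_matching_Diff_edge[OF less.prems(3) \<open>e \<in> M1\<close>]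
            pairwise_crossing_subset[OF less.prems(4) Diff_subset]
            perfect_matching_Diff_edge[OF less.prems(5) \<open>e \<in> M2\<close>]
            pairwise_crossing_subset[OF less.prems(6) Diff_subset]])
    with \<open>e \<in> M1\<close> \<open>e \<in> M2\<close> show ?thesis
      by blast
  qed
qed

theorem theorem8:
  fixes P :: "(real^2) set"
  assumes "finite P" and "general_position P" and "even (card P)"
    and "perfect_matching P M1" and "pairwise_crossing M1"
    and "perfect_matching P M2" and "pairwise_crossing M2"
  shows "M1 = M2"
  using pairwise_crossing_perfect_matching_unique assms(1,2,4-7) .

end
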